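(* Let $a_1\in D$ be a pure quaternion with $N(a_1)\in -u\mathbb{Q}_2^{*2}$, where $u$ is a unit of non-minimal quadratic defect (i.e. $u\in-\mathbb{Z}_2^{*2}\cup-5\mathbb{Z}_2^{*2}$), and let $t\in\{3,4\}$. Say that $r\in\mathcal{O}_D$ satisfies the $k$-star conditions if $\left(\frac{N(1-r),\,-N(a_1)}{2}\right)=-1$, $N(z)N(a_1)\in\mathbb{Q}_2^{*2}$ and $N(z)N(2^ta_1)^{-1}\in\mathbb{Z}_2$, where $z=a_1-ra_1\bar r$. Then there exists $r\in\mathcal{O}_D$ satisfying the $k$-star conditions if and only if there exists $\alpha=a+b\omega+ci+di\omega$ with $a,b,c,d\in\mathbb{Z}$, $0\le a,b,c,d<2^{t+3}$, satisfying them.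
   Context: $D=\left(\frac{2,5}{\mathbb{Q}_2}\right)$ is the quaternion division algebra over $\mathbb{Q}_2$ with basis $1,i,j,ij$, $i^2=2$, $j^2=5$, $ij=-ji$; $\omega=(1+j)/2$; $q\mapsto\bar q$ is the canonical involution and $N$ the reduced norm; $\mathcal{O}_D=\mathbb{Z}_2\oplus\mathbb{Z}_2\omega\oplus\mathbb{Z}_2i\oplus\mathbb{Z}_2i\omega$ is the maximal order. $\left(\frac{x,y}{2}\right)$ is the Hilbert symbol of $\mathbb{Q}_2$. *)

theory Defs
  imports "HOL-Computational_Algebra.Formal_Laurent_Series"
begin

text \<open>We model Q_2 as the quotient ring Z((X)) / (X - 2) of integer Laurent series
  modulo the principal ideal generated by X - 2.  (Z[[X]]/(X-2) is Z_2 and inverting X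
  gives Q_2 = Z_2[1/2].)  Z_2 is the image of the power series with nonnegative
  subdegree.\<close>

definition q2_rel :: "int fls \<Rightarrow> int fls \<Rightarrow> bool" where
  "q2_rel f g \<longleftrightarrow> (fls_X - 2) dvd (f - g)"

lemma q2_rel_equivp: "equivp q2_rel"
proof (rule equivpI)
  show "reflp q2_rel" by (rule reflpI) (simp add: q2_rel_def)
  show "symp q2_rel"
  proof (rule sympI)
    fix f g assume "q2_rel f g"
    then have "(fls_X - 2) dvd (-(f - g))" unfolding q2_rel_def by (simp only: dvd_minus_iff)
    then show "q2_rel g f" unfolding q2_rel_def by simp
  qed
  show "transp q2_rel"
  proof (rule transpI)
    fix f g h assume "q2_rel f g" "q2_rel g h"
    then have "(fls_X - 2) dvd ((f - g) + (g - h))" unfolding q2_rel_def by (rule dvd_add)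
    then show "q2_rel f h" unfolding q2_rel_def by simp
  qed
qed

quotient_type q2 = "int fls" / q2_rel
  by (rule q2_rel_equivp)

instantiation q2 :: comm_ring_1
begin

lift_definition zero_q2 :: q2 is "0 :: int fls" .
lift_definition one_q2 :: q2 is "1 :: int fls" .

lift_definition plus_q2 :: "q2 \<Rightarrow> q2 \<Rightarrow> q2" is "(+)"
proof -
  fix a b c d :: "int fls"
  assume "q2_rel a b" "q2_rel c d"
  then have "(fls_X - 2) dvd ((a - b) + (c - d))" unfolding q2_rel_def by (rule dvd_add)
  then show "q2_rel (a + c) (b + d)" unfolding q2_rel_def by (simp add: algebra_simps)
qed

lift_definition uminus_q2 :: "q2 \<Rightarrow> q2" is uminus
proof -
  fix a b :: "int fls"
  assume "q2_rel a b"
  then have "(fls_X - 2) dvd (-(a - b))" unfolding q2_rel_def by (simp only: dvd_minus_iff)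
  then show "q2_rel (- a) (- b)" unfolding q2_rel_def by (simp add: algebra_simps)
qed

lift_definition minus_q2 :: "q2 \<Rightarrow> q2 \<Rightarrow> q2" is "(-)"
proof -
  fix a b c d :: "int fls"
  assume "q2_rel a b" "q2_rel c d"
  then have "(fls_X - 2) dvd ((a - b) - (c - d))" unfolding q2_rel_def by (rule dvd_diff)
  then show "q2_rel (a - c) (b - d)" unfolding q2_rel_def by (simp add: algebra_simps)
qed

lift_definition times_q2 :: "q2 \<Rightarrow> q2 \<Rightarrow> q2" is "(*)"
proof -
  fix a b c d :: "int fls"
  assume ab: "q2_rel a b" and cd: "q2_rel c d"
  have "(fls_X - 2) dvd (a * (c - d) + (a - b) * d)"
    using ab cd unfolding q2_rel_def by (intro dvd_add dvd_mult dvd_mult2)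
  then show "q2_rel (a * c) (b * d)" unfolding q2_rel_def by (simp add: algebra_simps)
qed

instance
proof
  fix a b c :: q2
  show "a * b * c = a * (b * c)" by transfer (simp add: algebra_simps q2_rel_def)
  show "a * b = b * a" by transfer (simp add: algebra_simps q2_rel_def)
  show "1 * a = a" by transfer (simp add: algebra_simps q2_rel_def)
  show "a + b + c = a + (b + c)" by transfer (simp add: algebra_simps q2_rel_def)
  show "a + b = b + a" by transfer (simp add: algebra_simps q2_rel_def)
  show "0 + a = a" by transfer (simp add: algebra_simps q2_rel_def)
  show "- a + a = 0" by transfer (simp add: algebra_simps q2_rel_def)
  show "a - b = a + - b" by transfer (simp add: algebra_simps q2_rel_def)
  show "(a + b) * c = a * c + b * c" by transfer (simp add: algebra_simps q2_rel_def)
  show "(0::q2) \<noteq> 1"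
  proof transfer
    show "\<not> q2_rel 0 1"
    proof
      assume "q2_rel 0 1"
      then obtain g :: "int fls" where g: "1 = (fls_X - 2) * g"
        unfolding q2_rel_def by (auto elim: dvdE)
      then have "g \<noteq> 0" by auto
      define m where "m = fls_subdegree g"
      have "fls_nth ((fls_X - 2) * g) m = fls_nth g (m - 1) - 2 * fls_nth g m"
        using fls_mult_of_int_nth(1)[of 2 g m]
        by (simp add: algebra_simps fls_X_times_conv_shift)
      also have "fls_nth g (m - 1) = 0" unfolding m_def by simp
      finally have eq: "fls_nth (1::int fls) m = - 2 * fls_nth g m" using g by simp
      have nz: "fls_nth g m \<noteq> 0" unfolding m_def using \<open>g \<noteq> 0\<close> by simp
      show False
      proof (cases "m = 0")
        case True
        then have "(1::int) = - 2 * fls_nth g m" using eq by simp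
        then have "(2::int) dvd 1" by (metis dvd_triv_left minus_mult_commute)
        then show False by simp
      next
        case False
        then show False using eq nz by simp
      qed
    qed
  qed
qed

end

definition Z2 :: "q2 set" where
  "Z2 = abs_q2 ` {f. 0 \<le> fls_subdegree f}"

definition Z2_units :: "q2 set" where
  "Z2_units = {x \<in> Z2. \<exists>y \<in> Z2. x * y = 1}"

definition Q2_sq :: "q2 set" where
  "Q2_sq = {y * y | y. y \<noteq> 0}"

definition Z2_sq :: "q2 set" where
  "Z2_sq = {y * y | y. y \<in> Z2_units}"

definition q2_inv :: "q2 \<Rightarrow> q2" where
  "q2_inv x = (SOME y. x * y = 1)"

text \<open>Hilbert symbol of Q_2 (for nonzero arguments).\<close>

definition hilbert2 :: "q2 \<Rightarrow> q2 \<Rightarrow> int" where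
  "hilbert2 x y =
     (if \<exists>X Y Z. (X, Y, Z) \<noteq> (0, 0, 0) \<and> x * X^2 + y * Y^2 = Z^2 then 1 else -1)"

text \<open>Quat x0 x1 x2 x3 = x0 + x1 i + x2 j + x3 ij.\<close>

datatype quat = Quat q2 q2 q2 q2

fun qadd :: "quat \<Rightarrow> quat \<Rightarrow> quat" where
  "qadd (Quat x0 x1 x2 x3) (Quat y0 y1 y2 y3) = Quat (x0 + y0) (x1 + y1) (x2 + y2) (x3 + y3)"

fun qsub :: "quat \<Rightarrow> quat \<Rightarrow> quat" where
  "qsub (Quat x0 x1 x2 x3) (Quat y0 y1 y2 y3) = Quat (x0 - y0) (x1 - y1) (x2 - y2) (x3 - y3)"

fun qscale :: "q2 \<Rightarrow> quat \<Rightarrow> quat" where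
  "qscale c (Quat x0 x1 x2 x3) = Quat (c * x0) (c * x1) (c * x2) (c * x3)"

text \<open>Multiplication with i^2 = 2, j^2 = 5, ij = -ji.\<close>

fun qmul :: "quat \<Rightarrow> quat \<Rightarrow> quat" where
  "qmul (Quat x0 x1 x2 x3) (Quat y0 y1 y2 y3) =
     Quat (x0*y0 + 2*x1*y1 + 5*x2*y2 - 10*x3*y3)
          (x0*y1 + x1*y0 - 5*x2*y3 + 5*x3*y2)
          (x0*y2 + x2*y0 + 2*x1*y3 - 2*x3*y1)
          (x0*y3 + x3*y0 + x1*y2 - x2*y1)"

fun qconj :: "quat \<Rightarrow> quat" where
  "qconj (Quat x0 x1 x2 x3) = Quat x0 (- x1) (- x2) (- x3)"

text \<open>Reduced norm N(q) = q * conj q.\<close>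

fun qnorm :: "quat \<Rightarrow> q2" where
  "qnorm (Quat x0 x1 x2 x3) = x0^2 - 2*x1^2 - 5*x2^2 + 10*x3^2"

fun pure :: "quat \<Rightarrow> bool" where
  "pure (Quat x0 x1 x2 x3) \<longleftrightarrow> x0 = 0"

definition q_one :: quat where "q_one = Quat 1 0 0 0"
definition q_i :: quat where "q_i = Quat 0 1 0 0"
definition q_omega :: quat where "q_omega = Quat (q2_inv 2) 0 (q2_inv 2) 0"

definition OD_elem :: "q2 \<Rightarrow> q2 \<Rightarrow> q2 \<Rightarrow> q2 \<Rightarrow> quat" where
  "OD_elem a b c d =
     qadd (qadd (qscale a q_one) (qscale b q_omega))
          (qadd (qscale c q_i) (qscale d (qmul q_i q_omega)))"

definition O_D :: "quat set" where
  "O_D = {OD_elem a b c d | a b c d. a \<in> Z2 \<and> b \<in> Z2 \<and> c \<in> Z2 \<and> d \<in> Z2}"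

definition star_conditions :: "quat \<Rightarrow> nat \<Rightarrow> quat \<Rightarrow> bool" where
  "star_conditions a1 t r \<longleftrightarrow>
     (let z = qsub a1 (qmul (qmul r a1) (qconj r)) in
        hilbert2 (qnorm (qsub q_one r)) (- qnorm a1) = -1 \<and>
        qnorm z * qnorm a1 \<in> Q2_sq \<and>
        qnorm z * q2_inv (qnorm (qscale (2 ^ t) a1)) \<in> Z2)"

end

theory Submission
  imports Defs
begin

text \<open>Both sides of the equivalence are false: for \<open>t \<ge> 3\<close> no quaternion at all satisfies
  the star conditions.  Write \<open>N = N(a\<^sub>1)\<close> and \<open>d = -N\<close>; the hypothesis on \<open>u\<close> says
  \<open>d \<in> -\<rat>\<^sub>2\<^sup>*\<^sup>2 \<union> -5\<rat>\<^sub>2\<^sup>*\<^sup>2\<close>, so by Hensel every element of \<open>1 + 4\<int>\<^sub>2\<close> is a norm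
  from \<open>\<rat>\<^sub>2(\<surd>d)\<close>.  For \<open>r = r\<^sub>0 + r'\<close> one computes
  \<open>N(z)/N = (1 + N(r))\<^sup>2 - 4A\<close> with \<open>A = r\<^sub>0\<^sup>2 - d (b/N)\<^sup>2\<close>, \<open>b\<close> the polar form of \<open>a\<^sub>1\<close>
  and \<open>r'\<close>; the star conditions make this a square \<open>s\<^sup>2\<close> with \<open>8 | s\<close>.  Splitting the
  quadratic \<open>L\<^sup>2 - (1 + N(r))L + A\<close> with \<open>s\<close> and comparing 2-adic valuations shows that
  \<open>N(1 - r)\<close> or \<open>A - N(r)\<close> is a norm.  The first is excluded by the Hilbert symbol; if the
  second is a norm, the anisotropy of the norm form of \<open>D\<close> forces it to vanish, which
  again makes \<open>N(1 - r)\<close> a norm.\<close>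

section \<open>The 2-adic integers as images of integer power series\<close>

definition q2_of_fps :: "int fps \<Rightarrow> q2" where
  "q2_of_fps F = abs_q2 (fps_to_fls F)"

lemma q2_of_fps_add [simp]: "q2_of_fps (F + G) = q2_of_fps F + q2_of_fps G"
  by (simp add: q2_of_fps_def plus_q2.abs_eq)

lemma q2_of_fps_mult [simp]: "q2_of_fps (F * G) = q2_of_fps F * q2_of_fps G"
  by (simp add: q2_of_fps_def times_q2.abs_eq fls_times_fps_to_fls)

lemma q2_of_fps_diff [simp]: "q2_of_fps (F - G) = q2_of_fps F - q2_of_fps G"
  by (simp add: q2_of_fps_def minus_q2.abs_eq)

lemma q2_of_fps_uminus [simp]: "q2_of_fps (- F) = - q2_of_fps F"
  by (simp add: q2_of_fps_def uminus_q2.abs_eq)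

lemma q2_of_fps_0 [simp]: "q2_of_fps 0 = 0"
  by (simp add: q2_of_fps_def zero_q2.abs_eq)

lemma q2_of_fps_1 [simp]: "q2_of_fps 1 = 1"
  by (simp add: q2_of_fps_def one_q2.abs_eq)

lemma q2_of_fps_power [simp]: "q2_of_fps (F ^ n) = q2_of_fps F ^ n"
  by (induction n) simp_all

lemma abs_q2_fls_X: "abs_q2 fls_X = 2"
proof -
  have "abs_q2 fls_X = abs_q2 (1 + 1)"
    by (simp add: q2.abs_eq_iff q2_rel_def)
  also have "\<dots> = 1 + 1"
    by (simp only: plus_q2.abs_eq[symmetric] one_q2.abs_eq)
  finally show ?thesis by simp
qed

lemma q2_of_fps_X [simp]: "q2_of_fps fps_X = 2"
  by (simp add: q2_of_fps_def abs_q2_fls_X)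

lemma q2_of_fps_of_nat [simp]: "q2_of_fps (of_nat n) = of_nat n"
  by (induction n) simp_all

lemma q2_of_fps_of_int [simp]: "q2_of_fps (of_int m) = of_int m"
  by (cases m rule: int_cases) (simp_all del: of_nat_Suc add: of_nat_Suc[symmetric])

lemma q2_of_fps_const [simp]: "q2_of_fps (fps_const m) = of_int m"
  by (metis fps_of_int of_int_eq_id id_apply q2_of_fps_of_int)

lemma Z2_eq_range: "Z2 = range q2_of_fps"
proof (intro equalityI subsetI)
  fix x assume "x \<in> Z2"
  then obtain f where "x = abs_q2 f" "0 \<le> fls_subdegree f"
    by (auto simp: Z2_def)
  then have "x = q2_of_fps (fls_regpart f)"
    by (simp add: q2_of_fps_def)
  then show "x \<in> range q2_of_fps" by blast
next
  fix x assume "x \<in> range q2_of_fps"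
  then show "x \<in> Z2"
    unfolding Z2_def q2_of_fps_def using fls_subdegree_fls_to_fps_gt0 by blast
qed

lemma q2_of_fps_in_Z2 [simp]: "q2_of_fps F \<in> Z2"
  by (simp add: Z2_eq_range)

lemma Z2_add [simp]: "x \<in> Z2 \<Longrightarrow> y \<in> Z2 \<Longrightarrow> x + y \<in> Z2"
  by (auto simp: Z2_eq_range simp flip: q2_of_fps_add)

lemma Z2_mult [simp]: "x \<in> Z2 \<Longrightarrow> y \<in> Z2 \<Longrightarrow> x * y \<in> Z2"
  by (auto simp: Z2_eq_range simp flip: q2_of_fps_mult)

lemma Z2_uminus [simp]: "x \<in> Z2 \<Longrightarrow> - x \<in> Z2"
  by (auto simp: Z2_eq_range simp flip: q2_of_fps_uminus)

lemma Z2_diff [simp]: "x \<in> Z2 \<Longrightarrow> y \<in> Z2 \<Longrightarrow> x - y \<in> Z2"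
  using Z2_add[of x "- y"] by simp

lemma Z2_of_int [simp]: "of_int m \<in> Z2"
  by (metis q2_of_fps_in_Z2 q2_of_fps_of_int)

lemma Z2_0 [simp]: "0 \<in> Z2" and Z2_1 [simp]: "1 \<in> Z2" and Z2_numeral [simp]: "numeral k \<in> Z2"
  using Z2_of_int[of 0] Z2_of_int[of 1] Z2_of_int[of "numeral k"] by simp_all

lemma Z2_power [simp]: "x \<in> Z2 \<Longrightarrow> x ^ n \<in> Z2"
  by (induction n) simp_all

definition trunc_2adic :: "nat \<Rightarrow> int fps \<Rightarrow> int" where
  "trunc_2adic n F = (\<Sum>i<n. F $ i * 2 ^ i)"

lemma trunc_2adic_Suc: "trunc_2adic (Suc n) F = trunc_2adic n F + F $ n * 2 ^ n"
  by (simp add: trunc_2adic_def)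

lemma q2_of_fps_split_first: "q2_of_fps F = of_int (F $ 0) + 2 * q2_of_fps (fps_shift 1 F)"
proof -
  have "F = fps_const (F $ 0) + fps_X * fps_shift 1 F"
  proof (rule fps_ext)
    fix n show "F $ n = (fps_const (F $ 0) + fps_X * fps_shift 1 F) $ n"
      by (cases n) simp_all
  qed
  then show ?thesis by (metis q2_of_fps_add q2_of_fps_const q2_of_fps_mult q2_of_fps_X)
qed

lemma q2_of_fps_split: "q2_of_fps F = of_int (trunc_2adic n F) + 2 ^ n * q2_of_fps (fps_shift n F)"
proof (induction n)
  case 0
  then show ?case by (simp add: trunc_2adic_def)
next
  case (Suc n)
  have "q2_of_fps (fps_shift n F) = of_int (F $ n) + 2 * q2_of_fps (fps_shift (Suc n) F)"
    using q2_of_fps_split_first[of "fps_shift n F"] fps_shift_fps_shift[of 1 n F] by simp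
  then show ?case
    using Suc.IH by (simp add: trunc_2adic_Suc algebra_simps)
qed

lemma q2_of_fps_eq_0_imp_even:
  assumes "q2_of_fps F = 0"
  shows "even (F $ 0)"
proof -
  from assms have "q2_rel (fps_to_fls F) 0"
    by (simp add: q2_of_fps_def q2.abs_eq_iff[symmetric] zero_q2.abs_eq)
  then obtain h :: "int fls" where h: "fps_to_fls F = (fls_X - 2) * h"
    unfolding q2_rel_def by (auto elim: dvdE)
  have coeff: "fls_nth ((fls_X - 2) * h) m = fls_nth h (m - 1) - 2 * fls_nth h m" for m
    using fls_mult_of_int_nth(1)[of 2 h m] by (simp add: algebra_simps fls_X_times_conv_shift)
  have "fls_nth h (-1) = 0"
  proof (rule ccontr)
    assume "fls_nth h (-1) \<noteq> 0"
    then have "h \<noteq> 0" and "fls_subdegree h \<le> -1"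
      by (auto intro: fls_subdegree_leI)
    then have "fls_nth ((fls_X - 2) * h) (fls_subdegree h) = 0"
      by (simp flip: h)
    with \<open>h \<noteq> 0\<close> show False
      using coeff[of "fls_subdegree h"] by simp
  qed
  have "F $ 0 = fls_nth (fps_to_fls F) 0" by simp
  also have "\<dots> = - 2 * fls_nth h 0"
    using coeff[of 0] h \<open>fls_nth h (-1) = 0\<close> by simp
  finally show ?thesis by simp
qed

text \<open>The quotients \<open>trunc_2adic (n + 1) F / 2\<^sup>n\<^sup>+\<^sup>1\<close> are, up to sign, the coefficients
  of a series \<open>H\<close> with \<open>F = (X - 2) H\<close>.\<close>

lemma q2_of_fps_eq_0_if_trunc_dvd:
  assumes "\<And>n. 2 ^ n dvd trunc_2adic n F"
  shows "q2_of_fps F = 0"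
proof -
  define k where "k n = trunc_2adic (Suc n) F div 2 ^ Suc n" for n
  have k: "trunc_2adic (Suc n) F = 2 ^ Suc n * k n" for n
    using assms[of "Suc n"] unfolding k_def by simp
  define H where "H = Abs_fps (\<lambda>n. - k n)"
  have "(fps_X - 2) * H = F"
  proof (rule fps_ext)
    fix n
    show "((fps_X - 2) * H) $ n = F $ n"
    proof (cases n)
      case 0
      then show ?thesis
        using k[of 0] by (simp add: H_def trunc_2adic_def fps_numeral_fps_const)
    next
      case (Suc m)
      have "2 ^ Suc m * (2 * k (Suc m)) = 2 ^ Suc m * (k m + F $ Suc m)"
        using k[of m] k[of "Suc m"] trunc_2adic_Suc[of "Suc m" F] by (simp add: algebra_simps)
      then have "2 * k (Suc m) = k m + F $ Suc m" by simp
      then show ?thesis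
        using Suc by (simp add: H_def algebra_simps fps_numeral_fps_const)
    qed
  qed
  then have "q2_of_fps F = (2 - 2) * q2_of_fps H"
    by (metis q2_of_fps_diff q2_of_fps_mult q2_of_fps_X q2_of_fps_of_int of_int_numeral)
  then show ?thesis by simp
qed

lemma q2_two_invertible: "\<exists>h :: q2. 2 * h = 1"
proof
  have "2 * abs_q2 fls_X_inv = abs_q2 (fls_X * fls_X_inv)"
    by (simp add: times_q2.abs_eq abs_q2_fls_X[symmetric])
  also have "\<dots> = 1"
    by (simp add: one_q2.abs_eq fls_X_times_conv_shift fls_X_inv_conv_shift_1)
  finally show "2 * abs_q2 fls_X_inv = 1" .
qed

lemma q2_mult_two_pow_cancel:
  fixes a b :: q2
  assumes "2 ^ n * a = 2 ^ n * b"
  shows "a = b"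
proof -
  obtain h :: q2 where "2 * h = 1" using q2_two_invertible by blast
  then have "(h ^ n * 2 ^ n) * a = (h ^ n * 2 ^ n) * b"
    using assms by (simp add: mult.assoc)
  with \<open>2 * h = 1\<close> show ?thesis
    by (metis mult.commute mult_1 power_mult_distrib power_one)
qed

section \<open>Divisibility by powers of 2, units and squares in \<open>\<int>\<^sub>2\<close>\<close>

definition pow2_dvd :: "nat \<Rightarrow> q2 \<Rightarrow> bool" where
  "pow2_dvd n x \<longleftrightarrow> (\<exists>y \<in> Z2. x = 2 ^ n * y)"

lemma pow2_dvdI: "y \<in> Z2 \<Longrightarrow> x = 2 ^ n * y \<Longrightarrow> pow2_dvd n x"
  unfolding pow2_dvd_def by blast

lemma pow2_dvd_0_iff [simp]: "pow2_dvd 0 x \<longleftrightarrow> x \<in> Z2"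
  by (simp add: pow2_dvd_def)

lemma pow2_dvd_zero [simp]: "pow2_dvd n 0"
  by (rule pow2_dvdI[of 0]) simp_all

lemma pow2_dvd_pow2_mult: "y \<in> Z2 \<Longrightarrow> pow2_dvd n (2 ^ n * y)"
  by (rule pow2_dvdI) simp_all

lemma pow2_dvd_add: "pow2_dvd n x \<Longrightarrow> pow2_dvd n y \<Longrightarrow> pow2_dvd n (x + y)"
  by (auto simp: pow2_dvd_def distrib_left intro!: bexI[of _ "_ + _"])

lemma pow2_dvd_diff: "pow2_dvd n x \<Longrightarrow> pow2_dvd n y \<Longrightarrow> pow2_dvd n (x - y)"
  by (auto simp: pow2_dvd_def right_diff_distrib intro!: bexI[of _ "_ - _"])

lemma pow2_dvd_mult_Z2: "pow2_dvd n x \<Longrightarrow> y \<in> Z2 \<Longrightarrow> pow2_dvd n (x * y)"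
  by (auto simp: pow2_dvd_def mult.assoc intro!: bexI[of _ "_ * _"])

lemma pow2_dvd_mult: "pow2_dvd m x \<Longrightarrow> pow2_dvd n y \<Longrightarrow> pow2_dvd (m + n) (x * y)"
  by (auto simp: pow2_dvd_def power_add mult_ac intro!: bexI[of _ "_ * _"])

lemma pow2_dvd_mono:
  assumes "m \<le> n" "pow2_dvd n x"
  shows "pow2_dvd m x"
proof -
  obtain y where "y \<in> Z2" "x = 2 ^ n * y"
    using assms(2) by (auto simp: pow2_dvd_def)
  moreover have "(2 :: q2) ^ n = 2 ^ m * 2 ^ (n - m)"
    using assms(1) by (simp flip: power_add)
  ultimately show ?thesis
    by (intro pow2_dvdI[of "2 ^ (n - m) * y"]) (simp_all add: mult.assoc)
qed

lemma pow2_dvd_of_int_iff: "pow2_dvd n (of_int m) \<longleftrightarrow> 2 ^ n dvd m"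
proof
  show "pow2_dvd n (of_int m) \<Longrightarrow> 2 ^ n dvd m"
  proof (induction n arbitrary: m)
    case 0
    then show ?case by simp
  next
    case (Suc n)
    then obtain y where y: "y \<in> Z2" "of_int m = 2 * (2 ^ n * y)"
      by (auto simp: pow2_dvd_def mult.assoc)
    then obtain G where G: "2 ^ n * y = q2_of_fps G"
      by (metis Z2_eq_range Z2_mult Z2_power Z2_numeral rangeE)
    have "q2_of_fps (fps_const m - fps_X * G) = 0"
      using y G by simp
    then have "even m"
      using q2_of_fps_eq_0_imp_even by fastforce
    then obtain m' where m': "m = 2 * m'" by blast
    then have "2 ^ 1 * of_int m' = 2 ^ 1 * (2 ^ n * y :: q2)"
      using y by simp
    then have "of_int m' = 2 ^ n * y"
      by (rule q2_mult_two_pow_cancel)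
    then have "pow2_dvd n (of_int m')"
      using y(1) by (intro pow2_dvdI)
    then show ?case
      using Suc.IH m' by simp
  qed
  show "2 ^ n dvd m \<Longrightarrow> pow2_dvd n (of_int m)"
    by (auto intro: pow2_dvdI[of "of_int _"] elim!: dvdE)
qed

lemma not_pow2_dvd_one: "\<not> pow2_dvd 1 1"
  using pow2_dvd_of_int_iff[of 1 1] by simp

lemma pow2_dvd_q2_of_fps_iff: "pow2_dvd n (q2_of_fps F) \<longleftrightarrow> 2 ^ n dvd trunc_2adic n F"
proof -
  have tail: "pow2_dvd n (2 ^ n * q2_of_fps (fps_shift n F))"
    by (simp add: pow2_dvd_pow2_mult)
  have "pow2_dvd n (q2_of_fps F) \<longleftrightarrow> pow2_dvd n (of_int (trunc_2adic n F))"
    using pow2_dvd_add[OF _ tail] pow2_dvd_diff[OF _ tail] q2_of_fps_split[of F n]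
    by (metis add_diff_cancel_right')
  then show ?thesis
    by (simp add: pow2_dvd_of_int_iff)
qed

lemma Z2_eq_0_if_pow2_dvd_all:
  assumes "x \<in> Z2" "\<And>n. pow2_dvd n x"
  shows "x = 0"
  using assms by (metis Z2_eq_range pow2_dvd_q2_of_fps_iff q2_of_fps_eq_0_if_trunc_dvd rangeE)

lemma Z2_approx_int:
  assumes "x \<in> Z2"
  obtains c where "pow2_dvd n (x - of_int c)"
proof -
  obtain F where "x = q2_of_fps F"
    using assms by (auto simp: Z2_eq_range)
  then have "x - of_int (trunc_2adic n F) = 2 ^ n * q2_of_fps (fps_shift n F)"
    using q2_of_fps_split[of F n] by simp
  then have "pow2_dvd n (x - of_int (trunc_2adic n F))"
    by (simp add: pow2_dvd_pow2_mult)
  then show ?thesis by (rule that)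
qed

lemma Z2_parity:
  assumes "x \<in> Z2"
  shows "pow2_dvd 1 x \<or> pow2_dvd 1 (x - 1)"
proof -
  obtain c where c: "pow2_dvd 1 (x - of_int c)"
    using Z2_approx_int[OF assms] .
  have "pow2_dvd 1 (of_int (c - c mod 2))"
    unfolding pow2_dvd_of_int_iff by (simp add: minus_mod_eq_mult_div)
  with c have "pow2_dvd 1 (x - of_int (c mod 2))"
    by (metis (no_types, lifting) diff_add_cancel diff_diff_eq2 of_int_diff pow2_dvd_add)
  moreover have "c mod 2 = 0 \<or> c mod 2 = 1" by presburger
  ultimately show ?thesis by auto
qed

lemma Z2_units_iff: "x \<in> Z2_units \<longleftrightarrow> x \<in> Z2 \<and> \<not> pow2_dvd 1 x"
proof
  assume "x \<in> Z2_units"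
  then obtain y where y: "x \<in> Z2" "y \<in> Z2" "x * y = 1"
    by (auto simp: Z2_units_def)
  have "\<not> pow2_dvd 1 x"
  proof
    assume "pow2_dvd 1 x"
    then have "pow2_dvd 1 (x * y)"
      using y(2) by (rule pow2_dvd_mult_Z2)
    then show False
      using y(3) not_pow2_dvd_one by simp
  qed
  with y show "x \<in> Z2 \<and> \<not> pow2_dvd 1 x" by blast
next
  assume x: "x \<in> Z2 \<and> \<not> pow2_dvd 1 x"
  then obtain w where "w \<in> Z2" "x = 1 + 2 * w"
    using Z2_parity[of x] by (auto simp: pow2_dvd_def algebra_simps)
  then obtain K where K: "x = q2_of_fps (1 + fps_X * K)"
    by (auto simp: Z2_eq_range)
  have "\<exists>G. 1 = (1 + fps_X * K) * G"
    by (subst fps_is_left_unit_iff_zeroth_is_left_unit) simp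
  then obtain G where "1 = x * q2_of_fps G"
    unfolding K by (metis q2_of_fps_1 q2_of_fps_mult)
  with x show "x \<in> Z2_units"
    by (auto simp: Z2_units_def)
qed

lemma Z2_units_mult:
  assumes "x \<in> Z2_units" "y \<in> Z2_units"
  shows "x * y \<in> Z2_units"
proof -
  obtain x' y' where "x \<in> Z2" "x' \<in> Z2" "x * x' = 1" "y \<in> Z2" "y' \<in> Z2" "y * y' = 1"
    using assms by (auto simp: Z2_units_def)
  moreover have "x * y * (x' * y') = (x * x') * (y * y')"
    by (simp add: mult_ac)
  ultimately show ?thesis
    unfolding Z2_units_def by (intro CollectI conjI bexI[of _ "x' * y'"]) simp_all
qed

function hensel_coeff :: "int fps \<Rightarrow> nat \<Rightarrow> int" where
  "hensel_coeff E n =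
     E $ n - (if n = 0 then 0 else (\<Sum>i<n. hensel_coeff E i * hensel_coeff E (n - 1 - i)))"
  by pat_completeness auto
termination by (relation "measure snd") auto

declare hensel_coeff.simps [simp del]

lemma hensel_coeff_solves: "Abs_fps (hensel_coeff E) + fps_X * Abs_fps (hensel_coeff E) ^ 2 = E"
proof (rule fps_ext)
  fix n
  show "(Abs_fps (hensel_coeff E) + fps_X * Abs_fps (hensel_coeff E) ^ 2) $ n = E $ n"
  proof (cases n)
    case 0
    then show ?thesis by (simp add: hensel_coeff.simps[of E 0])
  next
    case (Suc m)
    have "(Abs_fps (hensel_coeff E) ^ 2) $ m = (\<Sum>i<Suc m. hensel_coeff E i * hensel_coeff E (m - i))"
      by (simp add: power2_eq_square fps_mult_nth atLeast0AtMost lessThan_Suc_atMost)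
    then show ?thesis
      using Suc by (simp add: hensel_coeff.simps[of E "Suc m"])
  qed
qed

text \<open>Since \<open>(1 + 4y)\<^sup>2 = 1 + 8(y + 2y\<^sup>2)\<close>, it suffices to solve \<open>y + 2y\<^sup>2 = e\<close>,
  i.e.\ \<open>Y + X Y\<^sup>2 = E\<close> over \<open>\<int>[[X]]\<close>, which is done coefficientwise.\<close>

lemma Z2_one_plus_8_is_square:
  assumes "e \<in> Z2"
  shows "\<exists>g. g * g = 1 + 8 * e"
proof -
  obtain E where E: "e = q2_of_fps E"
    using assms by (auto simp: Z2_eq_range)
  define y where "y = q2_of_fps (Abs_fps (hensel_coeff E))"
  have "y + 2 * y ^ 2 = e"
    unfolding E y_def by (metis hensel_coeff_solves q2_of_fps_add q2_of_fps_mult q2_of_fps_X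
        q2_of_fps_power)
  then have "(1 + 4 * y) * (1 + 4 * y) = 1 + 8 * e"
    by (auto simp: algebra_simps power2_eq_square)
  then show ?thesis by blast
qed

lemma Z2_eq_pow2_times_unit:
  assumes "x \<in> Z2" "x \<noteq> 0"
  obtains m u where "u \<in> Z2_units" "x = 2 ^ m * u"
proof -
  obtain n where "\<not> pow2_dvd n x"
    using Z2_eq_0_if_pow2_dvd_all assms by blast
  then have "\<exists>m u. u \<in> Z2_units \<and> x = 2 ^ m * u"
    using assms(1)
  proof (induction n arbitrary: x)
    case 0
    then show ?case by simp
  next
    case (Suc n)
    show ?case
    proof (cases "pow2_dvd 1 x")
      case True
      then obtain y where y: "y \<in> Z2" "x = 2 * y"
        by (auto simp: pow2_dvd_def)
      have "\<not> pow2_dvd n y"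
        using Suc.prems(1) y pow2_dvd_mult[of 1 2 n y] pow2_dvd_of_int_iff[of 1 2] by auto
      with Suc.IH y(1) obtain m u where "u \<in> Z2_units" "y = 2 ^ m * u"
        by blast
      with y show ?thesis
        by (intro exI[of _ "Suc m"] exI[of _ u]) (simp add: mult.assoc)
    next
      case False
      with Suc.prems show ?thesis
        by (intro exI[of _ 0] exI[of _ x]) (simp add: Z2_units_iff)
    qed
  qed
  then show ?thesis using that by blast
qed

section \<open>The field \<open>\<rat>\<^sub>2\<close> and 2-adic valuations\<close>

lemma q2_times_pow2_in_Z2: "\<exists>k. x * 2 ^ k \<in> Z2"
proof (induction x rule: q2.abs_induct)
  case (1 f)
  define k where "k = nat (- fls_subdegree f)"
  have "0 \<le> fls_subdegree (fls_shift (- int k) f)"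
    by (rule fls_shift_nonneg_subdegree) (simp add: k_def)
  then have "abs_q2 (f * fls_X ^ k) \<in> Z2"
    unfolding Z2_def by (simp add: fls_X_power_times_conv_shift)
  moreover have "abs_q2 (fls_X ^ k) = 2 ^ k"
    by (induction k) (simp_all add: one_q2.abs_eq times_q2.abs_eq[symmetric] abs_q2_fls_X)
  ultimately have "abs_q2 f * 2 ^ k \<in> Z2"
    by (simp add: times_q2.abs_eq[symmetric])
  then show ?case by blast
qed

lemma q2_right_inverse_exists:
  fixes x :: q2
  assumes "x \<noteq> 0"
  shows "\<exists>y. x * y = 1"
proof -
  obtain k where k: "x * 2 ^ k \<in> Z2"
    using q2_times_pow2_in_Z2 by blast
  obtain h :: q2 where h: "2 * h = 1"
    using q2_two_invertible by blast
  have "x * 2 ^ k \<noteq> 0"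
    using assms q2_mult_two_pow_cancel[of k x 0] by (auto simp: mult.commute)
  then obtain m u where u: "u \<in> Z2_units" "x * 2 ^ k = 2 ^ m * u"
    using Z2_eq_pow2_times_unit k by blast
  then obtain v where v: "u * v = 1"
    by (auto simp: Z2_units_def)
  have "x * (2 ^ k * (h ^ m * v)) = (2 ^ m * u) * (h ^ m * v)"
    using u(2) by (metis mult.assoc)
  also have "\<dots> = (2 * h) ^ m * (u * v)"
    by (simp add: power_mult_distrib mult_ac)
  finally show ?thesis
    using h v by auto
qed

lemma q2_inv_left_inverse: "x \<noteq> 0 \<Longrightarrow> q2_inv x * x = 1"
  using q2_right_inverse_exists[of x] someI_ex[of "\<lambda>y. x * y = 1"]
  by (auto simp: q2_inv_def mult.commute)

instantiation q2 :: field
begin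

definition inverse_q2 :: "q2 \<Rightarrow> q2" where
  "inverse_q2 x = (if x = 0 then 0 else q2_inv x)"

definition divide_q2 :: "q2 \<Rightarrow> q2 \<Rightarrow> q2" where
  "divide_q2 x y = x * inverse y"

instance
  by standard (auto simp: inverse_q2_def divide_q2_def q2_inv_left_inverse)

end

lemma q2_inv_eq_inverse: "x \<noteq> 0 \<Longrightarrow> q2_inv x = inverse x"
  by (simp add: inverse_q2_def)

lemma of_int_q2_eq_0_imp:
  assumes "(of_int m :: q2) = 0"
  shows "m = 0"
proof (rule ccontr)
  assume "m \<noteq> 0"
  have "pow2_dvd (nat \<bar>m\<bar>) (of_int m)"
    using assms by simp
  then have "2 ^ nat \<bar>m\<bar> dvd m"
    by (simp only: pow2_dvd_of_int_iff)
  then have "\<bar>2 ^ nat \<bar>m\<bar>\<bar> \<le> \<bar>m\<bar>"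
    by (rule dvd_imp_le_int[OF \<open>m \<noteq> 0\<close>])
  moreover have "int (nat \<bar>m\<bar>) < int (2 ^ nat \<bar>m\<bar>)"
    by (simp only: of_nat_less_iff less_exp)
  ultimately show False by simp
qed

instance q2 :: field_char_0
proof
  show "inj (of_nat :: nat \<Rightarrow> q2)"
  proof (rule injI)
    fix a b :: nat
    assume "(of_nat a :: q2) = of_nat b"
    then have "(of_int (int a - int b) :: q2) = 0"
      by (simp only: of_int_diff of_int_of_nat_eq diff_self)
    then have "int a - int b = 0"
      by (rule of_int_q2_eq_0_imp)
    then show "a = b" by simp
  qed
qed

lemma inverse_in_Z2_if_unit: "u \<in> Z2_units \<Longrightarrow> inverse u \<in> Z2"
  by (auto simp: Z2_units_def dest: inverse_unique)

lemma Z2_units_nonzero: "u \<in> Z2_units \<Longrightarrow> u \<noteq> 0"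
  by (auto simp: Z2_units_def)

lemma q2_eq_unit_times_pow2_ratio:
  assumes "x \<noteq> 0"
  obtains u m k where "u \<in> Z2_units" "x = u * 2 ^ m / 2 ^ k"
proof -
  obtain k where k: "x * 2 ^ k \<in> Z2"
    using q2_times_pow2_in_Z2 by blast
  moreover have "x * 2 ^ k \<noteq> 0"
    using assms by simp
  ultimately obtain m u where "u \<in> Z2_units" "x * 2 ^ k = 2 ^ m * u"
    using Z2_eq_pow2_times_unit by blast
  then show ?thesis
    using that[of u m k] by (simp add: field_simps)
qed

lemma pow2_dvd_unit_times_pow2_ratio_iff:
  assumes u: "u \<in> Z2_units"
  shows "pow2_dvd n (u * 2 ^ m / 2 ^ k) \<longleftrightarrow> k + n \<le> m"
proof
  assume "pow2_dvd n (u * 2 ^ m / 2 ^ k)"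
  then obtain y where y: "y \<in> Z2" "u * 2 ^ m = 2 ^ (k + n) * y"
    by (auto simp: pow2_dvd_def field_simps power_add)
  show "k + n \<le> m"
  proof (rule ccontr)
    assume "\<not> k + n \<le> m"
    then have "2 ^ (k + n) = (2 :: q2) ^ m * 2 ^ (k + n - m)"
      by (simp flip: power_add)
    with y(2) have "u = 2 ^ (k + n - m) * y"
      by simp
    then have "pow2_dvd 1 u"
      using \<open>\<not> k + n \<le> m\<close> y(1) pow2_dvd_mono[of 1 "k + n - m"] pow2_dvd_pow2_mult by simp
    with u show False
      by (simp add: Z2_units_iff)
  qed
next
  assume "k + n \<le> m"
  then have "u * 2 ^ m / 2 ^ k = 2 ^ n * (u * 2 ^ (m - k - n))"
    by (simp add: field_simps flip: power_add)
  moreover have "u * 2 ^ (m - k - n) \<in> Z2"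
    using u by (simp add: Z2_units_iff)
  ultimately show "pow2_dvd n (u * 2 ^ m / 2 ^ k)"
    by (simp add: pow2_dvd_pow2_mult)
qed

lemma pow2_dvd_square_imp:
  assumes "pow2_dvd (2 * n) (s * s)"
  shows "pow2_dvd n s"
proof (cases "s = 0")
  case False
  then obtain u m k where u: "u \<in> Z2_units" "s = u * 2 ^ m / 2 ^ k"
    by (rule q2_eq_unit_times_pow2_ratio)
  then have "s * s = (u * u) * 2 ^ (2 * m) / 2 ^ (2 * k)"
    by (simp add: power_mult power2_eq_square mult_ac)
  then have "2 * k + 2 * n \<le> 2 * m"
    using assms Z2_units_mult[OF u(1) u(1)] pow2_dvd_unit_times_pow2_ratio_iff by simp
  then show ?thesis
    using u pow2_dvd_unit_times_pow2_ratio_iff by simp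
qed simp

lemma pow2_dvd_2_or_two_div_in_Z2: "pow2_dvd 2 y \<or> (y \<noteq> 0 \<and> 2 / y \<in> Z2)"
proof (cases "y = 0")
  case False
  then obtain u m k where u: "u \<in> Z2_units" "y = u * 2 ^ m / 2 ^ k"
    by (rule q2_eq_unit_times_pow2_ratio)
  show ?thesis
  proof (cases "k + 2 \<le> m")
    case True
    then show ?thesis
      using u pow2_dvd_unit_times_pow2_ratio_iff by simp
  next
    case False
    then have "(2 :: q2) ^ Suc k = 2 ^ m * 2 ^ (Suc k - m)"
      by (simp flip: power_add)
    then have "2 / y = inverse u * 2 ^ (Suc k - m)"
      unfolding u(2) using Z2_units_nonzero[OF u(1)] by (simp add: field_simps)
    then show ?thesis
      using \<open>y \<noteq> 0\<close> inverse_in_Z2_if_unit[OF u(1)] by simp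
  qed
qed simp

section \<open>Anisotropy of the norm form of \<open>D\<close>\<close>

lemma int_square_mod_8: "\<exists>k. (even x \<and> (x :: int)^2 = 4 * k) \<or> (odd x \<and> x^2 = 8 * k + 1)"
proof (cases "even x")
  case True
  then obtain m where "x = 2 * m" by blast
  then show ?thesis by (intro exI[of _ "m * m"]) (simp add: power2_eq_square)
next
  case False
  then obtain m where m: "x = 2 * m + 1" by (blast elim: oddE)
  have "even (m * (m + 1))"
    by simp
  then obtain j where "m * (m + 1) = 2 * j" ..
  then show ?thesis
    using False unfolding m by (intro exI[of _ j]) (simp add: power2_eq_square algebra_simps)
qed

lemma int_norm_form_mod_8:
  assumes "8 dvd ((a :: int)^2 - 2 * b^2 - 5 * c^2 + 10 * d^2)"
  shows "even a \<and> even c"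
proof -
  obtain ka kb kc kd where
    "(even a \<and> a^2 = 4 * ka) \<or> (odd a \<and> a^2 = 8 * ka + 1)"
    "(even b \<and> b^2 = 4 * kb) \<or> (odd b \<and> b^2 = 8 * kb + 1)"
    "(even c \<and> c^2 = 4 * kc) \<or> (odd c \<and> c^2 = 8 * kc + 1)"
    "(even d \<and> d^2 = 4 * kd) \<or> (odd d \<and> d^2 = 8 * kd + 1)"
    using int_square_mod_8[of a] int_square_mod_8[of b] int_square_mod_8[of c]
      int_square_mod_8[of d] by blast
  then show ?thesis
    using assms by presburger
qed

lemma pow2_dvd_of_int_mult: "pow2_dvd n x \<Longrightarrow> pow2_dvd n (of_int k * x)"
  using pow2_dvd_mult_Z2[of n x "of_int k"] by (simp add: mult.commute)

lemma pow2_dvd_square_diff: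
  assumes "pow2_dvd n (x - y)" "x \<in> Z2" "y \<in> Z2"
  shows "pow2_dvd n (x^2 - y^2)"
proof -
  have "x^2 - y^2 = (x - y) * (x + y)"
    by (simp add: power2_eq_square algebra_simps)
  then show ?thesis
    using assms by (simp add: pow2_dvd_mult_Z2)
qed

lemma Z2_norm_form_zero_imp_even:
  assumes Z2: "a \<in> Z2" "b \<in> Z2" "c \<in> Z2" "d \<in> Z2" and zero: "qnorm (Quat a b c d) = 0"
  shows "pow2_dvd 1 a \<and> pow2_dvd 1 c"
proof -
  obtain ia ib ic id where approx:
    "pow2_dvd 3 (a - of_int ia)" "pow2_dvd 3 (b - of_int ib)"
    "pow2_dvd 3 (c - of_int ic)" "pow2_dvd 3 (d - of_int id)"
    using Z2 by (meson Z2_approx_int)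
  define iN where "iN = ia^2 - 2 * ib^2 - 5 * ic^2 + 10 * id^2"
  have eq: "qnorm (Quat a b c d) - of_int iN =
      (a^2 - (of_int ia)^2) - of_int 2 * (b^2 - (of_int ib)^2)
      - of_int 5 * (c^2 - (of_int ic)^2) + of_int 10 * (d^2 - (of_int id)^2)"
    by (simp add: iN_def algebra_simps)
  have squares: "pow2_dvd 3 (a^2 - (of_int ia)^2)" "pow2_dvd 3 (b^2 - (of_int ib)^2)"
    "pow2_dvd 3 (c^2 - (of_int ic)^2)" "pow2_dvd 3 (d^2 - (of_int id)^2)"
    using approx Z2 by (simp_all add: pow2_dvd_square_diff)
  have "pow2_dvd 3 ((a^2 - (of_int ia)^2) - of_int 2 * (b^2 - (of_int ib)^2)
      - of_int 5 * (c^2 - (of_int ic)^2) + of_int 10 * (d^2 - (of_int id)^2))"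
    by (intro squares pow2_dvd_add pow2_dvd_diff pow2_dvd_of_int_mult)
  then have "pow2_dvd 3 (qnorm (Quat a b c d) - of_int iN)"
    unfolding eq .
  then have "8 dvd iN"
    using zero pow2_dvd_of_int_mult[of 3 _ "-1"] by (fastforce simp: pow2_dvd_of_int_iff)
  then have "even ia" "even ic"
    using int_norm_form_mod_8 unfolding iN_def by blast+
  then have "pow2_dvd 1 (of_int ia)" "pow2_dvd 1 (of_int ic)"
    by (simp_all add: pow2_dvd_of_int_iff)
  then show ?thesis
    using pow2_dvd_mono[of 1 3] approx(1,3) pow2_dvd_add by fastforce
qed

text \<open>Descent: halving \<open>a\<close> and \<open>c\<close> swaps the roles of the two pairs of coordinates.\<close>

lemma Z2_norm_form_zero_imp_pow2_dvd:
  assumes "a \<in> Z2" "b \<in> Z2" "c \<in> Z2" "d \<in> Z2" "qnorm (Quat a b c d) = 0"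
  shows "pow2_dvd n a \<and> pow2_dvd n b \<and> pow2_dvd n c \<and> pow2_dvd n d"
  using assms
proof (induction n arbitrary: a b c d)
  case 0
  then show ?case by simp
next
  case (Suc n)
  obtain a' c' where a': "a' \<in> Z2" "a = 2 * a'" and c': "c' \<in> Z2" "c = 2 * c'"
    using Z2_norm_form_zero_imp_even[OF Suc.prems] by (auto simp: pow2_dvd_def)
  have "qnorm (Quat a b c d) = -2 * qnorm (Quat b a' d c')"
    unfolding a'(2) c'(2) by (simp add: power2_eq_square algebra_simps)
  then have "qnorm (Quat b a' d c') = 0"
    using Suc.prems(5) by (simp del: qnorm.simps)
  then obtain b' d' where b': "b' \<in> Z2" "b = 2 * b'" and d': "d' \<in> Z2" "d = 2 * d'"
    using Z2_norm_form_zero_imp_even[OF Suc.prems(2) a'(1) Suc.prems(4) c'(1)]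
    by (auto simp: pow2_dvd_def)
  have "qnorm (Quat a b c d) = 4 * qnorm (Quat a' b' c' d')"
    unfolding a'(2) b'(2) c'(2) d'(2) by (simp add: power2_eq_square algebra_simps)
  then have "qnorm (Quat a' b' c' d') = 0"
    using Suc.prems(5) by (simp del: qnorm.simps)
  then have "pow2_dvd n a' \<and> pow2_dvd n b' \<and> pow2_dvd n c' \<and> pow2_dvd n d'"
    using Suc.IH a'(1) b'(1) c'(1) d'(1) by blast
  then show ?case
    using a'(2) b'(2) c'(2) d'(2) by (auto simp: pow2_dvd_def mult.assoc)
qed

theorem qnorm_eq_0_iff: "qnorm q = 0 \<longleftrightarrow> q = Quat 0 0 0 0"
proof
  assume zero: "qnorm q = 0"
  obtain a b c d where q: "q = Quat a b c d"
    by (cases q)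
  obtain k where k: "a * 2 ^ k \<in> Z2" "b * 2 ^ k \<in> Z2" "c * 2 ^ k \<in> Z2" "d * 2 ^ k \<in> Z2"
  proof -
    obtain ka kb kc kd where "a * 2 ^ ka \<in> Z2" "b * 2 ^ kb \<in> Z2" "c * 2 ^ kc \<in> Z2" "d * 2 ^ kd \<in> Z2"
      using q2_times_pow2_in_Z2 by metis
    moreover have "x * 2 ^ j \<in> Z2 \<Longrightarrow> j \<le> K \<Longrightarrow> x * 2 ^ K \<in> Z2" for x :: q2 and j K
      by (metis Z2_mult Z2_numeral Z2_power le_add_diff_inverse mult.assoc power_add)
    ultimately show ?thesis
      by (intro that[of "ka + kb + kc + kd"]) simp_all
  qed
  have "qnorm (Quat (a * 2 ^ k) (b * 2 ^ k) (c * 2 ^ k) (d * 2 ^ k)) = (2 ^ k)^2 * qnorm q"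
    unfolding q by (simp add: power_mult_distrib algebra_simps)
  then have "qnorm (Quat (a * 2 ^ k) (b * 2 ^ k) (c * 2 ^ k) (d * 2 ^ k)) = 0"
    using zero by simp
  then have "\<And>n. pow2_dvd n (a * 2 ^ k) \<and> pow2_dvd n (b * 2 ^ k) \<and>
      pow2_dvd n (c * 2 ^ k) \<and> pow2_dvd n (d * 2 ^ k)"
    using Z2_norm_form_zero_imp_pow2_dvd[OF k] by blast
  then show "q = Quat 0 0 0 0"
    using Z2_eq_0_if_pow2_dvd_all k unfolding q by (metis mult_eq_0_iff power_not_zero zero_neq_numeral)
qed simp

section \<open>Norms from \<open>\<rat>\<^sub>2(\<surd>d)\<close>\<close>

definition norm_values :: "q2 \<Rightarrow> q2 set" where
  "norm_values d = {p^2 - d * q^2 | p q. True}"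

lemma norm_valuesI: "x = p^2 - d * q^2 \<Longrightarrow> x \<in> norm_values d"
  unfolding norm_values_def by blast

lemma square_in_norm_values: "g^2 \<in> norm_values d"
  by (rule norm_valuesI[of _ g d 0]) simp

lemma norm_values_mult:
  assumes "x \<in> norm_values d" "y \<in> norm_values d"
  shows "x * y \<in> norm_values d"
proof -
  obtain p q p' q' where xy: "x = p^2 - d * q^2" "y = p'^2 - d * q'^2"
    using assms by (auto simp: norm_values_def)
  have "x * y = (p * p' + d * q * q')^2 - d * (p * q' + q * p')^2"
    unfolding xy by (simp add: power2_eq_square algebra_simps)
  then show ?thesis by (rule norm_valuesI)
qed

lemma norm_values_divide:
  assumes "x \<in> norm_values d" "y \<in> norm_values d" "y \<noteq> 0"
  shows "x / y \<in> norm_values d"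
proof -
  have "x / y = x * y * (inverse y)^2"
    using assms(3) by (simp add: power2_eq_square field_simps)
  then show ?thesis
    using assms(1,2) by (simp add: norm_values_mult square_in_norm_values)
qed

lemma hilbert2_eq_1_if_norm_value:
  assumes "x \<in> norm_values d"
  shows "hilbert2 x d = 1"
proof -
  obtain p q where "x = p^2 - d * q^2"
    using assms by (auto simp: norm_values_def)
  then have "((1 :: q2), q, p) \<noteq> (0, 0, 0) \<and> x * 1^2 + d * q^2 = p^2"
    by simp
  then show ?thesis
    unfolding hilbert2_def by metis
qed

text \<open>For \<open>d \<in> -\<rat>\<^sub>2\<^sup>*\<^sup>2 \<union> -5\<rat>\<^sub>2\<^sup>*\<^sup>2\<close> (the non-minimal defect case)
  every element of \<open>1 + 4\<int>\<^sub>2\<close> is a norm from \<open>\<rat>\<^sub>2(\<surd>d)\<close>: it is a square or \<open>5\<close>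
  times a square by Hensel, and \<open>5\<close> is a norm.\<close>

lemma one_mod_4_in_norm_values:
  assumes d: "d = -(e * e) \<or> d = -5 * (e * e)" "e \<noteq> 0"
    and x: "pow2_dvd 2 (x - 1)"
  shows "x \<in> norm_values d"
proof -
  have five: "5 * g^2 \<in> norm_values d" for g
    using d(1)
  proof
    assume "d = -(e * e)"
    then show ?thesis
      using d(2) by (intro norm_valuesI[of _ g d "2 * g / e"]) (simp add: field_simps power2_eq_square)
  next
    assume "d = -5 * (e * e)"
    then show ?thesis
      using d(2) by (intro norm_valuesI[of _ 0 d "g / e"]) (simp add: field_simps power2_eq_square)
  qed
  obtain m where m: "m \<in> Z2" "x = 1 + 4 * m"
    using x by (auto simp: pow2_dvd_def algebra_simps)
  from Z2_parity[OF m(1)] show ?thesis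
  proof
    assume "pow2_dvd 1 m"
    then obtain m' where "m' \<in> Z2" "m = 2 * m'"
      by (auto simp: pow2_dvd_def)
    moreover obtain g where "g * g = 1 + 8 * m'"
      using Z2_one_plus_8_is_square \<open>m' \<in> Z2\<close> by blast
    ultimately have "x = g^2"
      using m(2) by (simp add: power2_eq_square)
    then show ?thesis
      by (simp add: square_in_norm_values)
  next
    assume "pow2_dvd 1 (m - 1)"
    then obtain m' where m': "m' \<in> Z2" "m = 1 + 2 * m'"
      by (auto simp: pow2_dvd_def algebra_simps)
    have "5 \<in> Z2_units"
      using pow2_dvd_of_int_iff[of 1 5] by (simp add: Z2_units_iff)
    then have "m' * inverse 5 \<in> Z2"
      using m'(1) inverse_in_Z2_if_unit Z2_mult by blast
    then obtain g where g: "g * g = 1 + 8 * (m' * inverse 5)"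
      using Z2_one_plus_8_is_square by blast
    have "x = 5 * (1 + 8 * (m' * inverse 5))"
      using m(2) m'(2) by (simp add: field_simps)
    then show ?thesis
      using five[of g] g by (simp add: power2_eq_square)
  qed
qed

lemma quadratic_root_identities:
  fixes A B s L :: "'a :: field_char_0"
  assumes s: "s * s = (1 + A - B)^2 - 4 * A"
    and L: "L = (1 + A - B + s) / 2"
  shows "L^2 - (1 + A - B) * L + A = 0" and "B = (1 - L) * (1 - L + s)"
proof -
  have "4 * (L^2 - (1 + A - B) * L + A) = s * s - ((1 + A - B)^2 - 4 * A)"
    unfolding L by (simp add: field_simps power2_eq_square)
  then show "L^2 - (1 + A - B) * L + A = 0"
    using s by (metis diff_self mult_eq_0_iff zero_neq_numeral)
  have "4 * ((1 - L) * (1 - L + s) - B) = ((1 + A - B)^2 - 4 * A) - s * s"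
    unfolding L by (simp add: field_simps power2_eq_square)
  then show "B = (1 - L) * (1 - L + s)"
    using s by (metis diff_self eq_iff_diff_eq_0 mult_eq_0_iff zero_neq_numeral)
qed

text \<open>With \<open>L\<close> the root of \<open>L\<^sup>2 - (1 + n) L + A\<close> chosen via \<open>s\<close>, \<open>L\<close> times the first
  value is a norm and the second value is \<open>(1 - L)(1 - L + s)\<close>; since \<open>s\<close> is
  highly divisible, one of \<open>L\<close> and \<open>1 + s/(1 - L)\<close> lies in \<open>1 + 4\<int>\<^sub>2\<close>.\<close>

lemma norm_values_dichotomy:
  assumes one_mod_4: "\<And>x. pow2_dvd 2 (x - 1) \<Longrightarrow> x \<in> norm_values d"
    and s: "s * s = (1 + n)^2 - 4 * A" "pow2_dvd 3 s"
    and A: "A = r0^2 - d * c^2"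
  shows "1 - 2 * r0 + n \<in> norm_values d \<or> A - n \<in> norm_values d"
proof -
  define L where "L = (1 + n + s) / 2"
  have L_root: "L^2 - (1 + n) * L + A = 0" and factor: "A - n = (1 - L) * (1 - L + s)"
    using quadratic_root_identities[of s A "A - n" L] s(1) by (simp_all add: L_def)
  have "L * (1 - 2 * r0 + n) = (r0 - L)^2 - d * c^2"
    using L_root unfolding A by (simp add: power2_eq_square algebra_simps)
  then have norm_prod: "L * (1 - 2 * r0 + n) \<in> norm_values d"
    by (rule norm_valuesI)
  consider "pow2_dvd 2 (1 - L)" | "1 - L \<noteq> 0" "2 / (1 - L) \<in> Z2"
    using pow2_dvd_2_or_two_div_in_Z2 by blast
  then show ?thesis
  proof cases
    case 1
    then have "pow2_dvd 2 (L - 1)"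
      using pow2_dvd_diff[OF pow2_dvd_zero 1] by simp
    then have "L \<in> norm_values d"
      by (rule one_mod_4)
    moreover have "L \<noteq> 0"
      using 1 pow2_dvd_mono[of 1 2] not_pow2_dvd_one by auto
    ultimately have "L * (1 - 2 * r0 + n) / L \<in> norm_values d"
      using norm_prod norm_values_divide by blast
    then show ?thesis
      using \<open>L \<noteq> 0\<close> by simp
  next
    case 2
    obtain w where w: "w \<in> Z2" "s = 2^3 * w"
      using s(2) by (auto simp: pow2_dvd_def)
    have "s / (1 - L) = 2^2 * (w * (2 / (1 - L)))"
      unfolding w(2) by (simp add: field_simps)
    moreover have "w * (2 / (1 - L)) \<in> Z2"
      using w(1) 2(2) by (rule Z2_mult)
    ultimately have "pow2_dvd 2 (1 + s / (1 - L) - 1)"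
      by (simp add: pow2_dvdI)
    then have "1 + s / (1 - L) \<in> norm_values d"
      by (rule one_mod_4)
    moreover have "A - n = (1 - L)^2 * (1 + s / (1 - L))"
      unfolding factor using 2(1) by (simp add: field_simps power2_eq_square)
    ultimately show ?thesis
      by (simp add: norm_values_mult square_in_norm_values)
  qed
qed

section \<open>The star conditions\<close>

fun qpolar :: "quat \<Rightarrow> quat \<Rightarrow> q2" where
  "qpolar (Quat x0 x1 x2 x3) (Quat y0 y1 y2 y3) = x0 * y0 - 2 * x1 * y1 - 5 * x2 * y2 + 10 * x3 * y3"

lemma qnorm_qscale: "qnorm (qscale c q) = c^2 * qnorm q"
  by (cases q) (simp add: power_mult_distrib algebra_simps)

lemma qnorm_sub_conjugation:
  assumes "pure a"
  shows "qnorm (qsub a (qmul (qmul (Quat r0 r1 r2 r3) a) (qconj (Quat r0 r1 r2 r3)))) =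
    qnorm a * (1 + qnorm (Quat r0 r1 r2 r3))^2
    - 4 * (qnorm a * r0^2 + (qpolar a (Quat r0 r1 r2 r3))^2)"
  using assms by (cases a) (simp add: power2_eq_square algebra_simps)

lemma qpolar_square_eq_if_norm_value:
  assumes "pure a" "pure y" "qnorm a \<noteq> 0"
    and "(qpolar a y)^2 / qnorm a - qnorm y \<in> norm_values (- qnorm a)"
  shows "(qpolar a y)^2 / qnorm a = qnorm y"
proof -
  obtain x1 x2 x3 y1 y2 y3 where a: "a = Quat 0 x1 x2 x3" and y: "y = Quat 0 y1 y2 y3"
    using assms(1,2) by (cases a, cases y) auto
  define N where "N = qnorm a"
  define b where "b = qpolar a y"
  obtain p q where pq: "b^2 / N - qnorm y = p^2 + N * q^2"
    using assms(4) by (auto simp: norm_values_def N_def b_def)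
  define c where "c = q - b / N"
  have "qnorm (Quat p (c * x1 + y1) (c * x2 + y2) (c * x3 + y3)) = p^2 + c^2 * N + 2 * c * b + qnorm y"
    unfolding N_def b_def a y by (simp add: power2_eq_square algebra_simps)
  also have "\<dots> = p^2 + N * q^2 - (b^2 / N - qnorm y)"
    using assms(3) unfolding c_def N_def by (simp add: field_simps power2_eq_square)
  also have "\<dots> = 0"
    using pq by simp
  finally have "c * x1 + y1 = 0" "c * x2 + y2 = 0" "c * x3 + y3 = 0"
    by (simp_all only: qnorm_eq_0_iff quat.inject)
  then have "y = qscale (- c) a"
    unfolding a y by (simp add: eq_neg_iff_add_eq_0 add.commute)
  then have "b = - c * N" "qnorm y = c^2 * N"
    unfolding b_def N_def a by (simp_all add: qnorm_qscale power2_eq_square algebra_simps)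
  then show ?thesis
    using assms(3) by (simp add: N_def b_def power2_eq_square)
qed

lemma qnorm_square_class:
  assumes "u \<in> uminus ` Z2_sq \<union> (\<lambda>s. - 5 * s) ` Z2_sq"
    and "qnorm a1 \<in> (\<lambda>s. - u * s) ` Q2_sq"
  obtains e where "e \<noteq> 0" "qnorm a1 = e * e \<or> qnorm a1 = 5 * (e * e)"
proof -
  obtain w where w: "w \<in> Z2_units" "u = - (w * w) \<or> u = - 5 * (w * w)"
    using assms(1) by (auto simp: Z2_sq_def)
  obtain y where y: "y \<noteq> 0" "qnorm a1 = - u * (y * y)"
    using assms(2) by (auto simp: Q2_sq_def)
  have "w * y \<noteq> 0"
    using Z2_units_nonzero[OF w(1)] y(1) by simp
  moreover have "qnorm a1 = (w * y) * (w * y) \<or> qnorm a1 = 5 * ((w * y) * (w * y))"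
    using w(2) y(2) by (auto simp: algebra_simps)
  ultimately show ?thesis
    using that by blast
qed

lemma star_conditions_imp_hilbert:
  assumes "star_conditions a1 t r"
  shows "qnorm (qsub q_one r) \<notin> norm_values (- qnorm a1)"
proof -
  have "hilbert2 (qnorm (qsub q_one r)) (- qnorm a1) = -1"
    using assms unfolding star_conditions_def Let_def by blast
  then show ?thesis
    using hilbert2_eq_1_if_norm_value by force
qed

lemma star_conditions_imp_sqrt:
  assumes "star_conditions a1 t r" "qnorm a1 \<noteq> 0"
  obtains s where "s * s = qnorm (qsub a1 (qmul (qmul r a1) (qconj r))) / qnorm a1"
    and "pow2_dvd t s"
proof -
  define N where "N = qnorm a1"
  define Z where "Z = qnorm (qsub a1 (qmul (qmul r a1) (qconj r)))"
  have "Z * N \<in> Q2_sq" and Z2: "Z * q2_inv (qnorm (qscale (2 ^ t) a1)) \<in> Z2"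
    using assms(1) unfolding star_conditions_def Let_def Z_def N_def by blast+
  then obtain Y where "Z * N = Y * Y"
    by (auto simp: Q2_sq_def)
  define s where "s = Y / N"
  have N: "N \<noteq> 0"
    using assms(2) by (simp add: N_def)
  have "s * s = (Z * N) / (N * N)"
    unfolding s_def \<open>Z * N = Y * Y\<close> by simp
  also have "\<dots> = Z / N"
    using N by simp
  finally have sq: "s * s = Z / N" .
  have "qnorm (qscale (2 ^ t) a1) = 2 ^ (2 * t) * N"
    unfolding qnorm_qscale N_def by (simp only: power_even_eq)
  then have "Z / (2 ^ (2 * t) * N) \<in> Z2"
    using Z2 N by (simp add: q2_inv_eq_inverse divide_inverse)
  moreover have "s * s = 2 ^ (2 * t) * (Z / (2 ^ (2 * t) * N))"
    unfolding sq by simp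
  ultimately have "pow2_dvd (2 * t) (s * s)"
    by (rule pow2_dvdI)
  then have "pow2_dvd t s"
    by (rule pow2_dvd_square_imp)
  with sq show ?thesis
    using that unfolding Z_def N_def by blast
qed

theorem star_conditions_never_hold:
  assumes "pure a1" "e \<noteq> 0" "qnorm a1 = e * e \<or> qnorm a1 = 5 * (e * e)" "3 \<le> t"
  shows "\<not> star_conditions a1 t r"
proof
  assume star: "star_conditions a1 t r"
  obtain r0 r1 r2 r3 where r: "r = Quat r0 r1 r2 r3"
    by (cases r)
  define y where "y = Quat 0 r1 r2 r3"
  define N where "N = qnorm a1"
  define b where "b = qpolar a1 r"
  define A where "A = r0^2 + b^2 / N"
  have N: "N \<noteq> 0"
    using assms(2,3) by (auto simp: N_def)
  obtain s where s: "s * s = qnorm (qsub a1 (qmul (qmul r a1) (qconj r))) / N" "pow2_dvd t s"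
    using star_conditions_imp_sqrt[OF star] N unfolding N_def by blast
  have "s * s = (1 + qnorm r)^2 - 4 * A"
    using s(1) N assms(1) unfolding r qnorm_sub_conjugation[OF assms(1)]
    by (simp add: A_def N_def b_def r field_simps)
  moreover have "pow2_dvd 3 s"
    using s(2) assms(4) pow2_dvd_mono by blast
  moreover have "A = r0^2 - (- N) * (b / N)^2"
    using N by (simp add: A_def power2_eq_square)
  moreover have "pow2_dvd 2 (x - 1) \<Longrightarrow> x \<in> norm_values (- N)" for x
    using assms(2,3) by (intro one_mod_4_in_norm_values[of _ e]) (auto simp: N_def)
  ultimately have "1 - 2 * r0 + qnorm r \<in> norm_values (- N) \<or> A - qnorm r \<in> norm_values (- N)"
    using norm_values_dichotomy by blast
  moreover have lam: "qnorm (qsub q_one r) = 1 - 2 * r0 + qnorm r"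
    by (simp add: r q_one_def power2_eq_square algebra_simps)
  moreover have "qnorm (qsub q_one r) \<notin> norm_values (- N)"
    using star_conditions_imp_hilbert[OF star] by (simp add: N_def)
  ultimately have "A - qnorm r \<in> norm_values (- N)"
    by simp
  moreover have n_split: "qnorm r = r0^2 + qnorm y"
    by (simp add: r y_def)
  moreover have "qpolar a1 y = b"
    using assms(1) by (cases a1) (simp add: b_def r y_def)
  ultimately have "b^2 / N - qnorm y \<in> norm_values (- N)"
    by (simp add: A_def)
  moreover have "pure y"
    by (simp add: y_def)
  ultimately have "b^2 / N = qnorm y"
    using qpolar_square_eq_if_norm_value[OF assms(1)] N \<open>qpolar a1 y = b\<close>
    unfolding N_def by metis
  then have "qnorm (qsub q_one r) = (1 - r0)^2 + b^2 / N"
    unfolding lam n_split by (simp add: power2_eq_square algebra_simps)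
  also have "\<dots> = (1 - r0)^2 - (- N) * (b / N)^2"
    using N by (simp add: power2_eq_square)
  finally have "qnorm (qsub q_one r) = (1 - r0)^2 - (- N) * (b / N)^2" .
  then have "qnorm (qsub q_one r) \<in> norm_values (- N)"
    by (rule norm_valuesI)
  with \<open>qnorm (qsub q_one r) \<notin> norm_values (- N)\<close> show False ..
qed

theorem proposition5p2:
  fixes a1 :: quat and u :: q2 and t :: nat
  assumes "pure a1"
    and "u \<in> uminus ` Z2_sq \<union> (\<lambda>s. - 5 * s) ` Z2_sq"
    and "qnorm a1 \<in> (\<lambda>s. - u * s) ` Q2_sq"
    and "t \<in> {3, 4}"
  shows "(\<exists>r \<in> O_D. star_conditions a1 t r) \<longleftrightarrow>
         (\<exists>a b c d :: int.
             0 \<le> a \<and> a < 2 ^ (t + 3) \<and> 0 \<le> b \<and> b < 2 ^ (t + 3) \<and>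
             0 \<le> c \<and> c < 2 ^ (t + 3) \<and> 0 \<le> d \<and> d < 2 ^ (t + 3) \<and>
             star_conditions a1 t (OD_elem (of_int a) (of_int b) (of_int c) (of_int d)))"
proof -
  obtain e where "e \<noteq> 0" "qnorm a1 = e * e \<or> qnorm a1 = 5 * (e * e)"
    using qnorm_square_class[OF assms(2,3)] .
  moreover have "3 \<le> t"
    using assms(4) by auto
  ultimately have "\<not> star_conditions a1 t r" for r
    using star_conditions_never_hold[OF assms(1)] by blast
  then show ?thesis by blast
qed

end
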